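(* Let $x$ be a sequence of length $n$, let $i\in\{1,\ldots,n-1\}$ and $y=\tau(x,i)$. Define $r=\overleftarrow{b_x}$ if $x[i]<x[i+1]$ and $\overleftarrow{b_x}>1$; $r=\overleftarrow{a_x}+1$ if $x[i]>x[i+1]$ and $\overleftarrow{a_x}>0$; and $r=n-i+1$ otherwise. Define $\ell=\overrightarrow{a_x}$ if $x[i]<x[i+1]$ and $\overrightarrow{a_x}>0$; $\ell=\overrightarrow{b_x}-1$ if $x[i]>x[i+1]$ and $\overrightarrow{b_x}>1$; and $\ell=i$ otherwise. Then $\overrightarrow{PD}_x[k]=\overrightarrow{PD}_y[k]$ for all $k\in\{i+r,\ldots,n\}$, and $\overleftarrow{PD}_x[k]=\overleftarrow{PD}_y[k]$ for all $k\in\{1,\ldots,i-\ell\}$.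
   Context: Sequences are finite sequences of pairwise distinct integers indexed from $1$. For $1\le i\le n-1$, $\tau(x,i)$ is obtained from $x$ by exchanging $x[i]$ and $x[i+1]$. The parent-distance table of $x$ is $\overrightarrow{PD}_x[k]=k-\max\{j<k : x[j]<x[k]\}$ if such $j$ exists and $0$ otherwise; the reverse parent-distance table is $\overleftarrow{PD}_x[k]=\min\{j : k<j\le n,\ x[j]<x[k]\}-k$ if such $j$ exists and $0$ otherwise. Notation: $\overrightarrow{a_x}=\overrightarrow{PD}_x[i]$, $\overrightarrow{b_x}=\overrightarrow{PD}_x[i+1]$, $\overleftarrow{a_x}=\overleftarrow{PD}_x[i+1]$, $\overleftarrow{b_x}=\overleftarrow{PD}_x[i]$. Index ranges $\{a,\ldots,b\}$ with $a>b$ are empty. *)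

theory Defs
  imports Main
begin

text \<open>Sequences are lists of pairwise distinct integers, indexed from 1:
  the k-th entry x[k] is  at x k = x ! (k - 1)  for 1 <= k <= length x.\<close>

definition at :: "int list \<Rightarrow> nat \<Rightarrow> int" where
  "at x k = x ! (k - 1)"

definition tau :: "int list \<Rightarrow> nat \<Rightarrow> int list" where
  "tau x i = x[i - 1 := at x (i + 1), i := at x i]"

definition PD_fwd :: "int list \<Rightarrow> nat \<Rightarrow> nat" where
  "PD_fwd x k =
     (if \<exists>j. 1 \<le> j \<and> j < k \<and> at x j < at x k
      then k - Max {j. 1 \<le> j \<and> j < k \<and> at x j < at x k}
      else 0)"

definition PD_bwd :: "int list \<Rightarrow> nat \<Rightarrow> nat" where
  "PD_bwd x k =
     (if \<exists>j. k < j \<and> j \<le> length x \<and> at x j < at x k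
      then Min {j. k < j \<and> j \<le> length x \<and> at x j < at x k} - k
      else 0)"

end

theory Submission
  imports Defs
begin

text \<open>The parent of position k (for either table) is decided by comparisons with entries on
  one side of k only. If a window of consecutive positions not containing i, i+1 already holds
  an entry smaller than x[k], the parent lies in that window and is untouched by the swap.
  Otherwise neither x[i] nor x[i+1] is smaller than x[k], so the swap does not change which
  positions hold smaller entries. Each of r and l in the statement is chosen exactly so that an
  entry below both x[i] and x[i+1] separates the swapped pair from the relevant range of k.\<close>

lemma length_tau [simp]: "length (tau x i) = length x"
  by (simp add: tau_def)

lemma at_tau_left: "1 \<le> i \<Longrightarrow> i < length x \<Longrightarrow> at (tau x i) i = at x (i + 1)"
  by (auto simp: tau_def at_def nth_list_update)

lemma at_tau_right: "1 \<le> i \<Longrightarrow> i < length x \<Longrightarrow> at (tau x i) (i + 1) = at x i"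
  by (auto simp: tau_def at_def nth_list_update)

lemma at_tau_other: "1 \<le> j \<Longrightarrow> j \<noteq> i \<Longrightarrow> j \<noteq> i + 1 \<Longrightarrow> at (tau x i) j = at x j"
  by (auto simp: tau_def at_def)

lemma less_at_tau_iff:
  assumes "1 \<le> i" "i < length x" "1 \<le> j" "1 \<le> k" "k \<noteq> i" "k \<noteq> i + 1"
    and "\<not> at x i < at x k" "\<not> at x (i + 1) < at x k"
  shows "at (tau x i) j < at (tau x i) k \<longleftrightarrow> at x j < at x k"
  using assms at_tau_left at_tau_right at_tau_other[of k i x] at_tau_other[of j i x]
  by (cases "j = i"; cases "j = i + 1") auto

lemma PD_fwd_cong:
  assumes "\<And>j. 1 \<le> j \<Longrightarrow> j < k \<Longrightarrow> at y j < at y k \<longleftrightarrow> at x j < at x k"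
  shows "PD_fwd y k = PD_fwd x k"
proof -
  have "{j. 1 \<le> j \<and> j < k \<and> at y j < at y k} = {j. 1 \<le> j \<and> j < k \<and> at x j < at x k}"
    using assms by auto
  then show ?thesis
    unfolding PD_fwd_def by (metis (no_types, lifting) mem_Collect_eq)
qed

lemma PD_bwd_cong:
  assumes "length y = length x"
    and "\<And>j. k < j \<Longrightarrow> j \<le> length x \<Longrightarrow> at y j < at y k \<longleftrightarrow> at x j < at x k"
  shows "PD_bwd y k = PD_bwd x k"
proof -
  have "{j. k < j \<and> j \<le> length y \<and> at y j < at y k}
      = {j. k < j \<and> j \<le> length x \<and> at x j < at x k}"
    using assms by auto
  then show ?thesis
    unfolding PD_bwd_def by (metis (no_types, lifting) mem_Collect_eq)
qed

lemma PD_fwd_eq_Max_window: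
  assumes "1 \<le> m" "m \<le> j" "j < k" "at x j < at x k"
  shows "PD_fwd x k = k - Max {j. m \<le> j \<and> j < k \<and> at x j < at x k}"
proof -
  let ?S = "{j. 1 \<le> j \<and> j < k \<and> at x j < at x k}"
  let ?W = "{j. m \<le> j \<and> j < k \<and> at x j < at x k}"
  have fin: "finite ?S" "finite ?W"
    by (auto intro: finite_subset[of _ "{..<k}"])
  have "j \<in> ?S" using assms by simp
  then have "j \<le> Max ?S" "Max ?S \<in> ?S"
    using Max_ge[OF fin(1)] Max_in[OF fin(1)] by blast+
  then have "Max ?S \<in> ?W" using assms(2) by simp
  then have "Max ?W = Max ?S"
    using fin assms(1) by (intro antisym Max_mono Max_ge) auto
  moreover have "PD_fwd x k = k - Max ?S"
    using \<open>j \<in> ?S\<close> unfolding PD_fwd_def by auto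
  ultimately show ?thesis by simp
qed

lemma PD_bwd_eq_Min_window:
  assumes "k < j" "j \<le> m" "m \<le> length x" "at x j < at x k"
  shows "PD_bwd x k = Min {j. k < j \<and> j \<le> m \<and> at x j < at x k} - k"
proof -
  let ?S = "{j. k < j \<and> j \<le> length x \<and> at x j < at x k}"
  let ?W = "{j. k < j \<and> j \<le> m \<and> at x j < at x k}"
  have fin: "finite ?S" "finite ?W"
    by (auto intro: finite_subset[of _ "{..length x}"] finite_subset[of _ "{..m}"])
  have "j \<in> ?S" using assms by simp
  then have "Min ?S \<le> j" "Min ?S \<in> ?S"
    using Min_le[OF fin(1)] Min_in[OF fin(1)] by blast+
  then have "Min ?S \<in> ?W" using assms(2) by simp
  then have "Min ?W = Min ?S"
    using fin assms(3) by (intro antisym Min_antimono Min_le) auto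
  moreover have "PD_bwd x k = Min ?S - k"
    using \<open>j \<in> ?S\<close> unfolding PD_bwd_def by auto
  ultimately show ?thesis by simp
qed

lemma PD_fwd_parent:
  assumes "0 < PD_fwd x k"
  shows "1 \<le> k - PD_fwd x k" "PD_fwd x k \<le> k" "at x (k - PD_fwd x k) < at x k"
proof -
  let ?S = "{j. 1 \<le> j \<and> j < k \<and> at x j < at x k}"
  have ex: "\<exists>j. j \<in> ?S"
    using assms unfolding PD_fwd_def by (auto split: if_splits)
  have "Max ?S \<in> ?S"
    using ex by (intro Max_in) (auto intro: finite_subset[of _ "{..<k}"])
  moreover have "PD_fwd x k = k - Max ?S"
    using ex unfolding PD_fwd_def by simp
  ultimately show "1 \<le> k - PD_fwd x k" "PD_fwd x k \<le> k" "at x (k - PD_fwd x k) < at x k"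
    by auto
qed

lemma PD_bwd_parent:
  assumes "0 < PD_bwd x k"
  shows "k + PD_bwd x k \<le> length x" "at x (k + PD_bwd x k) < at x k"
proof -
  let ?S = "{j. k < j \<and> j \<le> length x \<and> at x j < at x k}"
  have ex: "\<exists>j. j \<in> ?S"
    using assms unfolding PD_bwd_def by (auto split: if_splits)
  have "Min ?S \<in> ?S"
    using ex by (intro Min_in) (auto intro: finite_subset[of _ "{..length x}"])
  moreover have "PD_bwd x k = Min ?S - k"
    using ex unfolding PD_bwd_def by simp
  ultimately show "k + PD_bwd x k \<le> length x" "at x (k + PD_bwd x k) < at x k"
    by auto
qed

lemma PD_fwd_tau:
  assumes "1 \<le> i" "i < length x" "i + 2 \<le> m" "m \<le> k"
    and "at x m < at x i" "at x m < at x (i + 1)"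
  shows "PD_fwd (tau x i) k = PD_fwd x k"
proof (cases "at x m < at x k")
  case True
  let ?y = "tau x i"
  have unchanged: "at ?y j = at x j" if "m \<le> j" for j
    using that assms(3) by (intro at_tau_other) auto
  have "m < k" using True by (cases "m = k") (use assms(4) in auto)
  then have "PD_fwd ?y k = k - Max {j. m \<le> j \<and> j < k \<and> at ?y j < at ?y k}"
    using True assms(3) unchanged by (intro PD_fwd_eq_Max_window) auto
  also have "{j. m \<le> j \<and> j < k \<and> at ?y j < at ?y k} = {j. m \<le> j \<and> j < k \<and> at x j < at x k}"
    using unchanged assms(4) by auto
  also have "k - Max \<dots> = PD_fwd x k"
    using True \<open>m < k\<close> assms(3) by (intro PD_fwd_eq_Max_window[symmetric]) auto
  finally show ?thesis .
next
  case False
  then show ?thesis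
    using assms by (intro PD_fwd_cong less_at_tau_iff) auto
qed

lemma PD_bwd_tau:
  assumes "1 \<le> i" "i < length x" "1 \<le> k" "k \<le> m" "m < i"
    and "at x m < at x i" "at x m < at x (i + 1)"
  shows "PD_bwd (tau x i) k = PD_bwd x k"
proof (cases "at x m < at x k")
  case True
  let ?y = "tau x i"
  have unchanged: "at ?y j = at x j" if "1 \<le> j" "j \<le> m" for j
    using that assms(5) by (intro at_tau_other) auto
  have "k < m" using True by (cases "m = k") (use assms(4) in auto)
  then have "PD_bwd ?y k = Min {j. k < j \<and> j \<le> m \<and> at ?y j < at ?y k} - k"
    using True assms unchanged by (intro PD_bwd_eq_Min_window) auto
  also have "{j. k < j \<and> j \<le> m \<and> at ?y j < at ?y k} = {j. k < j \<and> j \<le> m \<and> at x j < at x k}"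
    using unchanged assms(3) by auto
  also have "Min \<dots> - k = PD_bwd x k"
    using True \<open>k < m\<close> assms by (intro PD_bwd_eq_Min_window[symmetric]) auto
  finally show ?thesis .
next
  case False
  then show ?thesis
    using assms by (intro PD_bwd_cong less_at_tau_iff) auto
qed

theorem lemma4:
  fixes x :: "int list" and n i r l :: nat
  assumes "distinct x"
    and "length x = n"
    and "1 \<le> i" and "i \<le> n - 1"
    and "r = (if at x i < at x (i + 1) \<and> PD_bwd x i > 1 then PD_bwd x i
              else if at x i > at x (i + 1) \<and> PD_bwd x (i + 1) > 0 then PD_bwd x (i + 1) + 1
              else n - i + 1)"
    and "l = (if at x i < at x (i + 1) \<and> PD_fwd x i > 0 then PD_fwd x i
              else if at x i > at x (i + 1) \<and> PD_fwd x (i + 1) > 1 then PD_fwd x (i + 1) - 1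
              else i)"
  shows "(\<forall>k. i + r \<le> k \<and> k \<le> n \<longrightarrow> PD_fwd x k = PD_fwd (tau x i) k)
       \<and> (\<forall>k. 1 \<le> k \<and> int k \<le> int i - int l \<longrightarrow> PD_bwd x k = PD_bwd (tau x i) k)"
proof (intro conjI allI impI)
  have i: "1 \<le> i" "i < length x" using assms(2-4) by auto
  fix k assume k: "i + r \<le> k \<and> k \<le> n"
  then have "i + 2 \<le> i + r \<and> at x (i + r) < at x i \<and> at x (i + r) < at x (i + 1)"
    using assms(2,5) PD_bwd_parent[of x i] PD_bwd_parent[of x "i + 1"]
    by (auto split: if_splits)
  then show "PD_fwd x k = PD_fwd (tau x i) k"
    using PD_fwd_tau[OF i, of "i + r" k] k by simp
next
  have i: "1 \<le> i" "i < length x" using assms(2-4) by auto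
  fix k assume k: "1 \<le> k \<and> int k \<le> int i - int l"
  then have "i - l < i \<and> at x (i - l) < at x i \<and> at x (i - l) < at x (i + 1)"
    using assms(6) PD_fwd_parent[of x i] PD_fwd_parent[of x "i + 1"]
    by (auto split: if_splits)
  moreover have "k \<le> i - l" using k by linarith
  ultimately show "PD_bwd x k = PD_bwd (tau x i) k"
    using PD_bwd_tau[OF i, of k "i - l"] k by simp
qed

end
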